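(* Let $I\in\{0,1\}^{n\times m}$ and let $\mathcal{G}\subseteq\mathcal{B}(\mathcal{E}(I))$ be such that $\mathcal{E}(I)=A_{\mathcal{G}}\circ B_{\mathcal{G}}$. Then every set $\mathcal{F}\subseteq\mathcal{B}(I)$ that contains, for each $\langle C,D\rangle\in\mathcal{G}$, at least one concept from the interval $\mathcal{I}_{C,D}$ of $\mathcal{B}(I)$ satisfies $I=A_{\mathcal{F}}\circ B_{\mathcal{F}}$.
   Context: For any $K\in\{0,1\}^{n\times m}$, with $X=\{1,\dots,n\}$, $Y=\{1,\dots,m\}$, define for $C\subseteq X$, $D\subseteq Y$: $C^{\uparrow_K}=\{j\in Y\mid \forall i\in C: K_{ij}=1\}$, $D^{\downarrow_K}=\{i\in X\mid \forall j\in D: K_{ij}=1\}$, and $\mathcal{B}(K)=\{\langle C,D\rangle\mid C^{\uparrow_K}=D, D^{\downarrow_K}=C\}$, ordered by $\langle C_1,D_1\rangle\leq\langle C_2,D_2\rangle$ iff $C_1\subseteq C_2$. For $\mathcal{F}=\{\langle C_1,D_1\rangle,\dots,\langle C_p,D_p\rangle\}\subseteq\mathcal{B}(K)$, $(A_{\mathcal{F}})_{il}=1$ iff $i\in C_l$ and $(B_{\mathcal{F}})_{lj}=1$ iff $j\in D_l$; $\circ$ is the Boolean product $(A\circ B)_{ij}=\max_l\min(A_{il},B_{lj})$. For the given $I$: $\gamma(C)=\langle C^{\uparrow_I\downarrow_I},C^{\uparrow_I}\rangle$, $\mu(D)=\langle D^{\downarrow_I},D^{\downarrow_I\uparrow_I}\rangle$,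 $\mathcal{I}_{C,D}=\{c\in\mathcal{B}(I)\mid\gamma(C)\leq c\leq\mu(D)\}$, $\mathcal{I}_{ij}=\mathcal{I}_{\{i\},\{j\}}$. $\mathcal{E}(I)\in\{0,1\}^{n\times m}$ is defined by $\mathcal{E}(I)_{ij}=1$ iff $\mathcal{I}_{ij}$ is non-empty and minimal w.r.t. $\subseteq$ among the non-empty sets $\mathcal{I}_{i'j'}$. *)

theory Defs
  imports Main
begin

text \<open>An n x m Boolean matrix K is represented by a predicate K :: nat \<Rightarrow> nat \<Rightarrow> bool,
  of which only the entries with row index in {1..n} and column index in {1..m} matter.\<close>

type_synonym bmat = "nat \<Rightarrow> nat \<Rightarrow> bool"
type_synonym concept = "nat set \<times> nat set"

definition up :: "nat \<Rightarrow> bmat \<Rightarrow> nat set \<Rightarrow> nat set" where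
  "up m K C = {j \<in> {1..m}. \<forall>i\<in>C. K i j}"

definition down :: "nat \<Rightarrow> bmat \<Rightarrow> nat set \<Rightarrow> nat set" where
  "down n K D = {i \<in> {1..n}. \<forall>j\<in>D. K i j}"

definition concepts :: "nat \<Rightarrow> nat \<Rightarrow> bmat \<Rightarrow> concept set" where
  "concepts n m K = {(C, D). up m K C = D \<and> down n K D = C}"

definition concept_le :: "concept \<Rightarrow> concept \<Rightarrow> bool" where
  "concept_le c1 c2 \<longleftrightarrow> fst c1 \<subseteq> fst c2"

definition bprod :: "'l set \<Rightarrow> (nat \<Rightarrow> 'l \<Rightarrow> bool) \<Rightarrow> ('l \<Rightarrow> nat \<Rightarrow> bool) \<Rightarrow> bmat" where
  "bprod L A B i j \<longleftrightarrow> (\<exists>l\<in>L. A i l \<and> B l j)"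

definition A_of :: "concept set \<Rightarrow> nat \<Rightarrow> concept \<Rightarrow> bool" where
  "A_of F i c \<longleftrightarrow> i \<in> fst c"

definition B_of :: "concept set \<Rightarrow> concept \<Rightarrow> nat \<Rightarrow> bool" where
  "B_of F c j \<longleftrightarrow> j \<in> snd c"

definition decomposes :: "nat \<Rightarrow> nat \<Rightarrow> bmat \<Rightarrow> concept set \<Rightarrow> bool" where
  "decomposes n m K F \<longleftrightarrow>
     (\<forall>i\<in>{1..n}. \<forall>j\<in>{1..m}. K i j = bprod F (A_of F) (B_of F) i j)"

definition gamma :: "nat \<Rightarrow> nat \<Rightarrow> bmat \<Rightarrow> nat set \<Rightarrow> concept" where
  "gamma n m I C = (down n I (up m I C), up m I C)"

definition mu :: "nat \<Rightarrow> nat \<Rightarrow> bmat \<Rightarrow> nat set \<Rightarrow> concept" where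
  "mu n m I D = (down n I D, up m I (down n I D))"

definition interval :: "nat \<Rightarrow> nat \<Rightarrow> bmat \<Rightarrow> nat set \<Rightarrow> nat set \<Rightarrow> concept set" where
  "interval n m I C D =
     {c \<in> concepts n m I. concept_le (gamma n m I C) c \<and> concept_le c (mu n m I D)}"

definition Iij :: "nat \<Rightarrow> nat \<Rightarrow> bmat \<Rightarrow> nat \<Rightarrow> nat \<Rightarrow> concept set" where
  "Iij n m I i j = interval n m I {i} {j}"

definition ess :: "nat \<Rightarrow> nat \<Rightarrow> bmat \<Rightarrow> bmat" where
  "ess n m I i j \<longleftrightarrow> i \<in> {1..n} \<and> j \<in> {1..m} \<and> Iij n m I i j \<noteq> {} \<and>
     (\<forall>i'\<in>{1..n}. \<forall>j'\<in>{1..m}. Iij n m I i' j' \<noteq> {} \<and> Iij n m I i' j' \<subseteq> Iij n m I i j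
        \<longrightarrow> Iij n m I i' j' = Iij n m I i j)"

end

theory Submission
  imports Defs
begin

text \<open>A concept lies in the interval I_ij iff it covers the entry (i, j), so I_ij is non-empty
  iff I i j, and a smaller interval means fewer covering concepts. Given I i j, an entry
  (i', j') whose interval is minimal below I_ij is essential, hence covered by some (C, D) in G.
  A concept of F in I_{C,D} then covers (i', j'), so it lies in I_{i'j'} \<subseteq> I_ij and covers (i, j).\<close>

lemma bprod_A_of_B_of_iff:
  "bprod F (A_of F) (B_of F) i j \<longleftrightarrow> (\<exists>c\<in>F. i \<in> fst c \<and> j \<in> snd c)"
  by (auto simp: bprod_def A_of_def B_of_def)

lemma concepts_subset_ranges:
  assumes "(C, D) \<in> concepts n m K"
  shows "C \<subseteq> {1..n}" and "D \<subseteq> {1..m}"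
  using assms by (auto simp: concepts_def up_def down_def)

lemma concepts_finite: "finite (concepts n m K)"
proof (rule finite_subset)
  show "concepts n m K \<subseteq> Pow {1..n} \<times> Pow {1..m}"
    using concepts_subset_ranges by fastforce
qed simp

lemma concept_entry:
  assumes "c \<in> concepts n m K" and "i \<in> fst c" and "j \<in> snd c"
  shows "K i j"
proof -
  have "fst c = down n K (snd c)"
    using assms(1) by (cases c) (simp add: concepts_def)
  then show ?thesis
    using assms(2,3) by (auto simp: down_def)
qed

lemma gamma_in_concepts:
  assumes "C \<subseteq> {1..n}"
  shows "gamma n m K C \<in> concepts n m K"
  using assms by (auto simp: gamma_def concepts_def up_def down_def; blast)

lemma down_antimono: "D \<subseteq> D' \<Longrightarrow> down n K D' \<subseteq> down n K D"
  by (auto simp: down_def)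

lemma up_down_galois:
  assumes "C \<subseteq> {1..n}" and "D \<subseteq> {1..m}"
  shows "D \<subseteq> up m K C \<longleftrightarrow> C \<subseteq> down n K D"
  using assms by (auto simp: up_def down_def)

lemma interval_iff:
  assumes "C \<subseteq> {1..n}" and "D \<subseteq> {1..m}"
  shows "c \<in> interval n m K C D \<longleftrightarrow> c \<in> concepts n m K \<and> C \<subseteq> fst c \<and> D \<subseteq> snd c"
proof (cases "c \<in> concepts n m K")
  case True
  obtain A B where c: "c = (A, B)"
    by fastforce
  with True have A: "down n K B = A" and B: "up m K A = B"
    by (auto simp: concepts_def)
  from True c have "A \<subseteq> {1..n}" and "B \<subseteq> {1..m}"
    using concepts_subset_ranges by blast+
  have "C \<subseteq> A \<longleftrightarrow> B \<subseteq> up m K C"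
    using up_down_galois[OF assms(1) \<open>B \<subseteq> {1..m}\<close>, where K = K] A by simp
  moreover have "C \<subseteq> down n K (up m K C)"
    using assms(1) by (auto simp: up_def down_def)
  ultimately have gamma_le: "down n K (up m K C) \<subseteq> A \<longleftrightarrow> C \<subseteq> A"
    using A down_antimono by blast
  have mu_le: "A \<subseteq> down n K D \<longleftrightarrow> D \<subseteq> B"
    using up_down_galois[OF \<open>A \<subseteq> {1..n}\<close> assms(2), where K = K] B by simp
  show ?thesis
    using True c gamma_le mu_le by (simp add: interval_def concept_le_def gamma_def mu_def)
qed (simp add: interval_def)

lemma Iij_eq:
  assumes "i \<in> {1..n}" and "j \<in> {1..m}"
  shows "Iij n m K i j = {c \<in> concepts n m K. i \<in> fst c \<and> j \<in> snd c}"
  using interval_iff[of "{i}" n "{j}" m] assms by (auto simp: Iij_def)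

lemma Iij_nonempty_iff:
  assumes "i \<in> {1..n}" and "j \<in> {1..m}"
  shows "Iij n m K i j \<noteq> {} \<longleftrightarrow> K i j"
proof
  assume "Iij n m K i j \<noteq> {}"
  then show "K i j"
    using assms concept_entry by (fastforce simp: Iij_eq)
next
  assume "K i j"
  then have "i \<in> fst (gamma n m K {i}) \<and> j \<in> snd (gamma n m K {i})"
    using assms by (auto simp: gamma_def up_def down_def)
  moreover have "gamma n m K {i} \<in> concepts n m K"
    using assms(1) by (simp add: gamma_in_concepts)
  ultimately show "Iij n m K i j \<noteq> {}"
    unfolding Iij_eq[OF assms] by blast
qed

lemma ess_entry_below:
  assumes "i \<in> {1..n}" and "j \<in> {1..m}" and "K i j"
  obtains i' j' where "i' \<in> {1..n}" and "j' \<in> {1..m}" and "ess n m K i' j'"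
    and "Iij n m K i' j' \<subseteq> Iij n m K i j"
proof -
  define P where "P = {(a, b). a \<in> {1..n} \<and> b \<in> {1..m} \<and>
    Iij n m K a b \<noteq> {} \<and> Iij n m K a b \<subseteq> Iij n m K i j}"
  define S where "S = (\<lambda>(a, b). Iij n m K a b) ` P"
  have "S \<subseteq> Pow (concepts n m K)"
    by (auto simp: S_def Iij_def interval_def)
  then have "finite S"
    by (rule finite_subset) (simp add: concepts_finite)
  moreover have "(i, j) \<in> P"
    using assms Iij_nonempty_iff by (simp add: P_def)
  then have "S \<noteq> {}"
    unfolding S_def by blast
  ultimately obtain M where "M \<in> S" and M_min: "\<forall>X\<in>S. X \<subseteq> M \<longrightarrow> M = X"
    using finite_has_minimal by blast
  then obtain i' j' where "(i', j') \<in> P" and M: "M = Iij n m K i' j'"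
    by (auto simp: S_def)
  then have i': "i' \<in> {1..n}" and j': "j' \<in> {1..m}" and ne: "Iij n m K i' j' \<noteq> {}"
    and below: "Iij n m K i' j' \<subseteq> Iij n m K i j"
    by (auto simp: P_def)
  have "ess n m K i' j'"
    unfolding ess_def
  proof (intro conjI i' j' ne ballI impI)
    fix a b assume "a \<in> {1..n}" "b \<in> {1..m}"
      and ab: "Iij n m K a b \<noteq> {} \<and> Iij n m K a b \<subseteq> Iij n m K i' j'"
    then have "(a, b) \<in> P"
      using below by (auto simp: P_def)
    then have "Iij n m K a b \<in> S"
      unfolding S_def by force
    then show "Iij n m K a b = Iij n m K i' j'"
      using M_min ab unfolding M by blast
  qed
  then show ?thesis
    using that i' j' below by blast
qed

theorem theorem3:
  fixes n m :: nat and I :: bmat and G F :: "concept set"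
  assumes "G \<subseteq> concepts n m (ess n m I)"
    and "decomposes n m (ess n m I) G"
    and "F \<subseteq> concepts n m I"
    and "\<forall>(C, D)\<in>G. F \<inter> interval n m I C D \<noteq> {}"
  shows "decomposes n m I F"
  unfolding decomposes_def bprod_A_of_B_of_iff
proof (intro ballI iffI)
  fix i j assume "i \<in> {1..n}" "j \<in> {1..m}" "\<exists>c\<in>F. i \<in> fst c \<and> j \<in> snd c"
  then show "I i j"
    using assms(3) concept_entry by blast
next
  fix i j assume i: "i \<in> {1..n}" and j: "j \<in> {1..m}" and "I i j"
  then obtain i' j' where i': "i' \<in> {1..n}" and j': "j' \<in> {1..m}"
    and "ess n m I i' j'" and below: "Iij n m I i' j' \<subseteq> Iij n m I i j"
    by (rule ess_entry_below)
  then obtain C D where CD: "(C, D) \<in> G" and "i' \<in> C" "j' \<in> D"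
    using assms(2) by (force simp: decomposes_def bprod_A_of_B_of_iff)
  moreover obtain c where "c \<in> F" and "c \<in> interval n m I C D"
    using assms(4) CD by blast
  moreover have "C \<subseteq> {1..n}" and "D \<subseteq> {1..m}"
    using assms(1) CD concepts_subset_ranges by blast+
  ultimately have "c \<in> Iij n m I i' j'"
    using interval_iff[of C n D m] Iij_eq[OF i' j'] by blast
  then show "\<exists>c\<in>F. i \<in> fst c \<and> j \<in> snd c"
    using below \<open>c \<in> F\<close> i j by (auto simp: Iij_eq)
qed

end
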